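(* Let $\triangle ABC\subset\mathbb{S}^2$ be a right spherical triangle with right angle at $C$, and let $a$ and $b$ denote the arclengths of the sides $BC$ and $CA$ respectively. Then \[4\pi\, M_A(\triangle ABC)=\tfrac12\, a\sin b,\qquad\text{where } M_A(R):=\int_R X\cdot A\,d\mu(X).\]
   Context: $\mathbb{S}^2\subset\mathbb{R}^3$ is the unit sphere, $\mu$ is the uniform probability measure on $\mathbb{S}^2$, and the vertices $A,B,C$ are regarded as unit vectors in $\mathbb{R}^3$. Side $a$ is opposite vertex $A$ and side $b$ is opposite vertex $B$. *)

theory Defs
  imports "HOL-Analysis.Analysis"
begin

text \<open>Uniform probability measure on the unit sphere S^2 in R^3, realised as the
  push-forward of the uniform (normalised Lebesgue) probability measure on the open
  unit ball under radial projection x \<mapsto> x / |x| (the point 0 is a null set).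
  This is the normalised cone measure, i.e. normalised surface area on S^2.\<close>
definition sphere_mu :: "(real^3) measure" where
  "sphere_mu = distr (uniform_measure lborel (ball 0 1)) borel sgn"

definition sph_triangle :: "real^3 \<Rightarrow> real^3 \<Rightarrow> real^3 \<Rightarrow> (real^3) set" where
  "sph_triangle A B C =
     {X. norm X = 1 \<and> (\<exists>\<alpha> \<beta> \<gamma>. \<alpha> \<ge> 0 \<and> \<beta> \<ge> 0 \<and> \<gamma> \<ge> 0 \<and>
            X = \<alpha> *\<^sub>R A + \<beta> *\<^sub>R B + \<gamma> *\<^sub>R C)}"

definition arclen :: "real^3 \<Rightarrow> real^3 \<Rightarrow> real" where
  "arclen X Y = arccos (X \<bullet> Y)"

text \<open>The spherical angle at C is right: the tangent vectors at C pointing along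
  the great-circle arcs towards A and towards B are orthogonal.\<close>
definition right_angle_at :: "real^3 \<Rightarrow> real^3 \<Rightarrow> real^3 \<Rightarrow> bool" where
  "right_angle_at C A B \<longleftrightarrow> (A - (A \<bullet> C) *\<^sub>R C) \<bullet> (B - (B \<bullet> C) *\<^sub>R C) = 0"

definition moment :: "real^3 \<Rightarrow> (real^3) set \<Rightarrow> real" where
  "moment A R = (LINT X:R|sphere_mu. X \<bullet> A)"

end

theory Submission
  imports Defs
begin

(*
  Put C at the pole of spherical coordinates (polar angle \<rho>, azimuth \<phi>) built on the
  orthonormal frame C, u, w, where u and w are the unit tangents at C towards B and A; the
  right angle at C is exactly the orthogonality of u and w.  The triangle then becomes
  {0 \<le> \<phi> \<le> pi/2, 0 \<le> \<rho> \<le> m \<phi>}, where cot (m \<phi>) = cos \<phi> cot a + sin \<phi> cot b describes the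
  hypotenuse AB.  Since \<mu> is the radial projection of normalised volume on the unit ball,
  M_A is 3/(4 pi) times the integral of (x/|x|) \<bullet> A over the part of the ball lying in the cone
  over the triangle.  Writing X(\<phi>, \<rho>) for the point with spherical coordinates (\<phi>, \<rho>), the
  substitution x = r X(\<phi>, t m \<phi>) turns this cone into a box, with Jacobian
  r^2 m \<phi> sin (t m \<phi>).  The integral over t is the \<phi>-derivative of
  -(sin b / 2) cos \<phi> m \<phi>, so the integral over \<phi> is (sin b / 2) m 0 = a sin b / 2, and the
  integral over r contributes the factor 1/3.
*)

section \<open>Integration over the three-dimensional unit ball\<close>

lemma has_derivative_vec_nth [derivative_intros]:
  "(f has_derivative f') F \<Longrightarrow> ((\<lambda>x. f x $ i) has_derivative (\<lambda>h. f' h $ i)) F"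
  by (rule bounded_linear.has_derivative[OF bounded_linear_vec_nth])

lemma has_absolute_integral_change_of_variables_real_valued:
  fixes f :: "real^'m::{finite,wellorder} \<Rightarrow> real" and g :: "real^'m::_ \<Rightarrow> real^'m::_"
  assumes "S \<in> sets lebesgue"
    and "\<And>x. x \<in> S \<Longrightarrow> (g has_derivative g' x) (at x within S)"
    and "inj_on g S"
  shows "(\<lambda>x. \<bar>det (matrix (g' x))\<bar> * f (g x)) absolutely_integrable_on S \<and>
           integral S (\<lambda>x. \<bar>det (matrix (g' x))\<bar> * f (g x)) = b
     \<longleftrightarrow> f absolutely_integrable_on (g ` S) \<and> integral (g ` S) f = b"
proof -
  have "(\<lambda>x. \<bar>det (matrix (g' x))\<bar> *\<^sub>R vec (f (g x)) :: real^1) absolutely_integrable_on S \<and>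
          integral S (\<lambda>x. \<bar>det (matrix (g' x))\<bar> *\<^sub>R vec (f (g x))) = (vec b :: real^1)
        \<longleftrightarrow> (\<lambda>x. vec (f x) :: real^1) absolutely_integrable_on (g ` S) \<and>
          integral (g ` S) (\<lambda>x. vec (f x)) = (vec b :: real^1)"
    using assms by (rule has_absolute_integral_change_of_variables)
  then show ?thesis
    by (simp add: absolutely_integrable_on_1_iff integral_on_1_eq vec_eq_iff)
qed

text \<open>Fubini's theorem is available on product types, change of variables only on
  \<open>real^'n\<close>; these two maps move box integrals between the two.\<close>

definition vec3_of_triple :: "real \<times> real \<times> real \<Rightarrow> real^3" where
  "vec3_of_triple = (\<lambda>(x, y, z). vector [x, y, z])"

definition triple_of_vec3 :: "real^3 \<Rightarrow> real \<times> real \<times> real" where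
  "triple_of_vec3 v = (v$1, v$2, v$3)"

lemma vec3_eq_iff: "(x::'a^3) = y \<longleftrightarrow> x$1 = y$1 \<and> x$2 = y$2 \<and> x$3 = y$3"
  by (auto simp: vec_eq_iff forall_3)

lemma vec3_of_triple_inverse [simp]: "triple_of_vec3 (vec3_of_triple p) = p"
  and triple_of_vec3_inverse [simp]: "vec3_of_triple (triple_of_vec3 v) = v"
  by (auto simp: vec3_of_triple_def triple_of_vec3_def vec3_eq_iff split: prod.splits)

lemma image_vec3_of_triple: "vec3_of_triple ` S = triple_of_vec3 -` S"
  by (auto simp: image_iff) (metis triple_of_vec3_inverse)

lemma image_triple_of_vec3: "triple_of_vec3 ` S = vec3_of_triple -` S"
  by (auto simp: image_iff) (metis vec3_of_triple_inverse)

lemma image_vec3_of_triple_cbox: "vec3_of_triple ` cbox u w = cbox (vec3_of_triple u) (vec3_of_triple w)"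
  unfolding image_vec3_of_triple
  by (cases u; cases w) (auto simp: mem_box_cart vec3_of_triple_def triple_of_vec3_def forall_3)

lemma image_triple_of_vec3_cbox: "triple_of_vec3 ` cbox u w = cbox (triple_of_vec3 u) (triple_of_vec3 w)"
  unfolding image_triple_of_vec3
  by (auto simp: mem_box_cart vec3_of_triple_def triple_of_vec3_def forall_3)

lemma content_image_vec3_of_triple_cbox:
  "measure lborel (vec3_of_triple ` cbox u w) = measure lborel (cbox u w)"
proof -
  obtain u1 u2 u3 w1 w2 w3 where uw: "u = (u1, u2, u3)" "w = (w1, w2, w3)"
    by (metis prod.collapse)
  have ne: "cbox (vec3_of_triple u) (vec3_of_triple w) \<noteq> {} \<longleftrightarrow> u1 \<le> w1 \<and> u2 \<le> w2 \<and> u3 \<le> w3"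
    by (simp add: interval_ne_empty_cart(1) forall_3 uw vec3_of_triple_def)
  show ?thesis
  proof (cases "u1 \<le> w1 \<and> u2 \<le> w2 \<and> u3 \<le> w3")
    case True
    have "measure lborel (cbox (vec3_of_triple u) (vec3_of_triple w))
        = (\<Prod>i\<in>UNIV. vec3_of_triple w $ i - vec3_of_triple u $ i)"
      using ne True by (intro content_cbox_cart) simp
    also have "\<dots> = (w1 - u1) * (w2 - u2) * (w3 - u3)"
      unfolding UNIV_3 by (simp add: uw vec3_of_triple_def)
    also have "\<dots> = measure lborel (cbox u w)"
      using True by (simp add: uw content_Pair)
    finally show ?thesis
      unfolding image_vec3_of_triple_cbox .
  next
    case False
    then show ?thesis
      using ne unfolding image_vec3_of_triple_cbox uw
      by (auto simp: content_Pair)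
  qed
qed

lemma continuous_vec3_of_triple: "continuous (at p) vec3_of_triple"
proof -
  have eq: "vec3_of_triple = (\<lambda>p. fst p *\<^sub>R axis 1 1 + fst (snd p) *\<^sub>R axis 2 1 + snd (snd p) *\<^sub>R axis 3 1)"
    by (auto simp: vec3_of_triple_def vec3_eq_iff axis_def)
  show ?thesis unfolding eq by (intro continuous_intros)
qed

lemma integral_cbox_vec3:
  fixes f :: "real^3 \<Rightarrow> real"
  assumes "f integrable_on cbox a b"
  shows "integral (cbox a b) f = integral (cbox (triple_of_vec3 a) (triple_of_vec3 b)) (f \<circ> vec3_of_triple)"
proof -
  have "((\<lambda>p. f (vec3_of_triple p)) has_integral (1 / 1) *\<^sub>R integral (cbox a b) f) (triple_of_vec3 ` cbox a b)"
  proof (rule has_integral_twiddle[where h=triple_of_vec3, rotated -1])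
    show "\<exists>w z. vec3_of_triple ` cbox u v = cbox w z" for u v
      using image_vec3_of_triple_cbox by blast
    show "\<exists>w z. triple_of_vec3 ` cbox u v = cbox w z" for u v
      using image_triple_of_vec3_cbox by blast
  qed (use assms in \<open>auto simp: content_image_vec3_of_triple_cbox continuous_vec3_of_triple\<close>)
  then show ?thesis
    by (simp add: image_triple_of_vec3_cbox integral_unique comp_def)
qed

lemma emeasure_unit_ball_3: "emeasure lborel (ball (0::real^3) 1) = ennreal (4/3 * pi)"
proof -
  have "measure lborel (ball (0::real^3) 1) = 4/3 * pi"
    using sphere_volume[of 1 0] by simp
  then show ?thesis
    using emeasure_lborel_ball_finite[of "0::real^3" 1] by (simp add: emeasure_eq_ennreal_measure)
qed

lemma integral_sphere_mu:
  fixes f :: "real^3 \<Rightarrow> real"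
  assumes [measurable]: "f \<in> borel_measurable borel"
    and "(\<lambda>x. f (sgn x)) absolutely_integrable_on ball 0 1"
  shows "(\<integral>X. f X \<partial>sphere_mu) = 3 / (4 * pi) * integral (ball 0 1) (\<lambda>x. f (sgn x))"
proof -
  let ?U = "uniform_measure lborel (ball (0::real^3) 1)"
  have [measurable]: "ball (0::real^3) 1 \<in> sets borel"
    by simp
  have U: "?U = density lborel (\<lambda>x. ennreal (indicator (ball 0 1) x / (4/3 * pi)))"
    unfolding uniform_measure_def emeasure_unit_ball_3
    by (simp add: divide_ennreal flip: ennreal_indicator)
  have "(\<integral>X. f X \<partial>sphere_mu) = (\<integral>x. f (sgn x) \<partial>?U)"
    unfolding sphere_mu_def by (rule integral_distr) measurable
  also have "\<dots> = (\<integral>x. (indicator (ball 0 1) x / (4/3 * pi)) *\<^sub>R f (sgn x) \<partial>lborel)"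
    unfolding U
  proof (rule integral_density)
    show "(\<lambda>x. indicator (ball (0::real^3) 1) x / (4/3 * pi)) \<in> borel_measurable lborel"
      by (intro borel_measurable_divide borel_measurable_indicator) auto
  qed auto
  also have "\<dots> = (\<integral>x. 3 / (4 * pi) * (indicator (ball 0 1) x * f (sgn x)) \<partial>lborel)"
    by (intro Bochner_Integration.integral_cong) (auto simp: indicator_def)
  also have "\<dots> = 3 / (4 * pi) * (LINT x:ball 0 1|lborel. f (sgn x))"
    unfolding set_lebesgue_integral_def by simp
  also have "(LINT x:ball 0 1|lborel. f (sgn x)) = (LINT x:ball 0 1|lebesgue. f (sgn x))"
    unfolding set_lebesgue_integral_def by (rule integral_completion[symmetric]) measurable
  also have "\<dots> = integral (ball 0 1) (\<lambda>x. f (sgn x))"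
    using assms(2) by (intro set_lebesgue_integral_eq_integral(2)) (simp add: absolutely_integrable_on_def)
  finally show ?thesis .
qed

section \<open>Polar and spherical coordinates\<close>

lemma polar_coordinates_upper_half_plane:
  fixes p q :: real
  assumes "0 < q"
  obtains \<theta> where "0 < \<theta>" "\<theta> < pi" "p = sqrt (p\<^sup>2 + q\<^sup>2) * cos \<theta>" "q = sqrt (p\<^sup>2 + q\<^sup>2) * sin \<theta>"
proof -
  define r where "r = sqrt (p\<^sup>2 + q\<^sup>2)"
  have q2: "q\<^sup>2 = r\<^sup>2 - p\<^sup>2"
    by (simp add: r_def)
  have "\<bar>p\<bar> < r"
    unfolding r_def using assms by (metis real_sqrt_abs real_sqrt_less_mono less_add_same_cancel1 zero_less_power)
  then have r: "0 < r" and pr: "-1 < p / r" "p / r < 1"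
    by (auto simp: field_simps abs_less_iff)
  define \<theta> where "\<theta> = arccos (p / r)"
  have "1 - (p / r)\<^sup>2 = (q / r)\<^sup>2"
    using r by (simp add: q2 power_divide field_simps)
  then have "sin \<theta> = sqrt ((q / r)\<^sup>2)"
    using pr by (simp add: \<theta>_def sin_arccos)
  then have "sin \<theta> = q / r"
    using assms r by simp
  moreover have "cos \<theta> = p / r"
    using pr by (simp add: \<theta>_def)
  moreover have "0 < \<theta>" "\<theta> < pi"
    using arccos_lt_bounded[OF pr] by (simp_all add: \<theta>_def)
  ultimately show thesis
    using that r by (simp flip: r_def)
qed

lemma tangent_nonzero_if_independent:
  fixes X C :: "'a::real_inner"
  assumes "independent S" "X \<in> S" "C \<in> S" "X \<noteq> C"
  shows "X - (X \<bullet> C) *\<^sub>R C \<noteq> 0"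
proof
  assume "X - (X \<bullet> C) *\<^sub>R C = 0"
  then have "X = (X \<bullet> C) *\<^sub>R C"
    by simp
  moreover have "C \<in> span (S - {X})"
    using assms(3,4) by (intro span_base) auto
  ultimately have "X \<in> span (S - {X})"
    by (metis span_mul)
  then show False
    using assms(1,2) dependent_def by blast
qed

lemma arc_decomposition:
  fixes X C :: "'a::real_inner"
  assumes "norm C = 1" "norm X = 1" "X - (X \<bullet> C) *\<^sub>R C \<noteq> 0"
  shows "X = cos (arccos (C \<bullet> X)) *\<^sub>R C + sin (arccos (C \<bullet> X)) *\<^sub>R sgn (X - (X \<bullet> C) *\<^sub>R C)"
    and "0 < arccos (C \<bullet> X)" "arccos (C \<bullet> X) < pi"
proof -
  define c where "c = C \<bullet> X"
  define T where "T = X - (X \<bullet> C) *\<^sub>R C"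
  have "(norm T)\<^sup>2 = T \<bullet> T"
    by (simp add: power2_norm_eq_inner)
  also have "\<dots> = 1 - c\<^sup>2"
    using assms(1,2) by (simp add: T_def c_def inner_diff_left inner_diff_right
        inner_commute power2_eq_square norm_eq_1)
  finally have norm_T: "(norm T)\<^sup>2 = 1 - c\<^sup>2" .
  moreover have "0 < (norm T)\<^sup>2"
    using assms(3) by (simp add: T_def)
  ultimately have "\<bar>c\<bar> < 1"
    by (simp flip: abs_square_less_1)
  then have c: "-1 < c" "c < 1" "sqrt (1 - c\<^sup>2) = norm T"
    by (auto simp flip: norm_T)
  show "0 < arccos (C \<bullet> X)" "arccos (C \<bullet> X) < pi"
    using arccos_lt_bounded[OF c(1,2)] by (simp_all add: c_def)
  have "norm T *\<^sub>R sgn T = T"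
    using assms(3) by (simp add: T_def sgn_div_norm)
  then have "X = c *\<^sub>R C + norm T *\<^sub>R sgn T"
    by (simp add: T_def c_def inner_commute)
  then show "X = cos (arccos (C \<bullet> X)) *\<^sub>R C + sin (arccos (C \<bullet> X)) *\<^sub>R sgn (X - (X \<bullet> C) *\<^sub>R C)"
    unfolding c_def[symmetric] T_def[symmetric] using c by (simp add: sin_arccos)
qed

section \<open>The hypotenuse seen from the right angle\<close>

locale right_triangle_legs =
  fixes a b :: real
  assumes a_bounds: "0 < a" "a < pi" and b_bounds: "0 < b" "b < pi"
begin

lemma sin_a_pos: "sin a > 0" and sin_b_pos: "sin b > 0"
  using a_bounds b_bounds by (auto intro: sin_gt_zero)

definition hyp_cot :: "real \<Rightarrow> real" where
  "hyp_cot \<phi> = cos \<phi> * cot a + sin \<phi> * cot b"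

text \<open>\<open>hyp_colat \<phi>\<close> is the polar angle, measured from C, at which the great circle
  through A and B meets the meridian of azimuth \<phi>: its cotangent is \<open>hyp_cot \<phi>\<close>.\<close>

definition hyp_colat :: "real \<Rightarrow> real" where
  "hyp_colat \<phi> = pi/2 - arctan (hyp_cot \<phi>)"

definition hyp_colat' :: "real \<Rightarrow> real" where
  "hyp_colat' \<phi> = (sin \<phi> * cot a - cos \<phi> * cot b) / (1 + (hyp_cot \<phi>)\<^sup>2)"

lemma hyp_colat_bounds: "0 < hyp_colat \<phi>" "hyp_colat \<phi> < pi"
  unfolding hyp_colat_def using arctan_lbound[of "hyp_cot \<phi>"] arctan_ubound[of "hyp_cot \<phi>"] by auto

lemma sin_hyp_colat_pos: "0 < sin (hyp_colat \<phi>)"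
  using hyp_colat_bounds by (simp add: sin_gt_zero)

lemma sin_hyp_colat: "sin (hyp_colat \<phi>) = 1 / sqrt (1 + (hyp_cot \<phi>)\<^sup>2)"
  unfolding hyp_colat_def by (simp add: sin_diff cos_arctan)

lemma cos_hyp_colat: "cos (hyp_colat \<phi>) = hyp_cot \<phi> * sin (hyp_colat \<phi>)"
  unfolding hyp_colat_def by (simp add: cos_diff sin_diff sin_arctan cos_arctan)

lemma hyp_colat_0: "hyp_colat 0 = a"
proof -
  have "cot a = tan (pi/2 - a)"
    by (simp add: cot_def tan_def sin_diff cos_diff)
  then have "arctan (cot a) = pi/2 - a"
    using a_bounds by (simp add: arctan_tan)
  then show ?thesis unfolding hyp_colat_def hyp_cot_def by simp
qed

lemma has_real_derivative_hyp_colat: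
  "(hyp_colat has_real_derivative hyp_colat' \<phi>) (at \<phi>)"
  unfolding hyp_colat_def[abs_def] hyp_colat'_def hyp_cot_def
  by (rule derivative_eq_intros refl | simp)+ (simp add: divide_inverse algebra_simps)

text \<open>The integrand \<open>X \<bullet> A\<close> times the Jacobian of \<open>cone_coords\<close> below, without its
  radial factor \<open>r^2\<close>.\<close>

definition moment_density :: "real \<Rightarrow> real \<Rightarrow> real" where
  "moment_density \<phi> t = hyp_colat \<phi> * sin (t * hyp_colat \<phi>) *
     (cos b * cos (t * hyp_colat \<phi>) + sin b * sin (t * hyp_colat \<phi>) * sin \<phi>)"

text \<open>The value is the \<open>\<phi>\<close>-derivative of \<open>-(sin b / 2) * cos \<phi> * hyp_colat \<phi>\<close>,
  which makes the azimuthal integral elementary.\<close>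

lemma has_integral_moment_density_colat:
  "(moment_density \<phi> has_integral sin b / 2 * (sin \<phi> * hyp_colat \<phi> - cos \<phi> * hyp_colat' \<phi>)) {0..1}"
proof -
  define m where "m = hyp_colat \<phi>"
  define P where "P t = cos b * (sin (t*m))\<^sup>2 / 2 + sin b * sin \<phi> * (t*m - sin (t*m) * cos (t*m)) / 2" for t
  have "(P has_real_derivative moment_density \<phi> t) (at t)" for t
  proof -
    have sc: "sin (m*t) * sin (m*t) = 1 - cos (m*t) * cos (m*t)"
      by (simp add: sin_squared_eq flip: power2_eq_square)
    show ?thesis
      unfolding P_def moment_density_def m_def[symmetric]
      by (rule derivative_eq_intros refl | simp)+ (simp add: algebra_simps sc, simp add: field_simps)
  qed
  then have "(moment_density \<phi> has_integral P 1 - P 0) {0..1}"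
    by (intro fundamental_theorem_of_calculus) (auto simp: has_real_derivative_iff_has_vector_derivative has_vector_derivative_at_within)
  moreover have "P 1 - P 0 = sin b / 2 * (sin \<phi> * m - cos \<phi> * hyp_colat' \<phi>)"
  proof -
    define k where "k = hyp_cot \<phi>"
    define D where "D = 1 + k\<^sup>2"
    have D: "D > 0" "sqrt D ^ 2 = D"
      by (simp_all add: D_def add_pos_nonneg)
    have sin2: "(sin m)\<^sup>2 = 1 / D" and sincos: "sin m * cos m = k / D"
      using D by (simp_all add: m_def k_def D_def cos_hyp_colat sin_hyp_colat power_divide power2_eq_square)
    have "P 1 - P 0 = cos b * (sin m)\<^sup>2 / 2 + sin b * sin \<phi> * (m - sin m * cos m) / 2"
      by (simp add: P_def)
    also have "\<dots> = sin b * sin \<phi> * m / 2 + (cos b - sin b * sin \<phi> * k) / D / 2"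
      unfolding sin2 sincos using D by (simp add: field_simps)
    also have "cos b - sin b * sin \<phi> * k = cos b * (1 - (sin \<phi>)\<^sup>2) - sin b * sin \<phi> * cos \<phi> * cot a"
      using sin_a_pos sin_b_pos by (simp add: k_def hyp_cot_def cot_def field_simps power2_eq_square)
    also have "\<dots> = - sin b * cos \<phi> * (sin \<phi> * cot a - cos \<phi> * cot b)"
      using sin_b_pos by (simp add: cot_def field_simps flip: cos_squared_eq) (simp add: power2_eq_square)
    finally show ?thesis
      unfolding hyp_colat'_def k_def[symmetric] D_def[symmetric] using D by (simp add: field_simps)
  qed
  ultimately show ?thesis by (simp add: m_def)
qed

lemma has_integral_moment_density_azimuth:
  "((\<lambda>\<phi>. sin b / 2 * (sin \<phi> * hyp_colat \<phi> - cos \<phi> * hyp_colat' \<phi>)) has_integral a * sin b / 2) {0..pi/2}"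
proof -
  define P where "P \<phi> = - sin b / 2 * cos \<phi> * hyp_colat \<phi>" for \<phi>
  have "(P has_real_derivative sin b / 2 * (sin \<phi> * hyp_colat \<phi> - cos \<phi> * hyp_colat' \<phi>)) (at \<phi>)" for \<phi>
    unfolding P_def
    by (rule derivative_eq_intros has_real_derivative_hyp_colat refl | simp)+ (simp add: algebra_simps)
  then have "((\<lambda>\<phi>. sin b / 2 * (sin \<phi> * hyp_colat \<phi> - cos \<phi> * hyp_colat' \<phi>)) has_integral P (pi/2) - P 0) {0..pi/2}"
    by (intro fundamental_theorem_of_calculus)
      (auto simp: has_real_derivative_iff_has_vector_derivative has_vector_derivative_at_within)
  moreover have "P (pi/2) - P 0 = a * sin b / 2"
    by (simp add: P_def hyp_colat_0)
  ultimately show ?thesis by simp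
qed

lemma continuous_on_moment_density: "continuous_on S (\<lambda>(\<phi>, t). moment_density \<phi> t)"
  unfolding moment_density_def case_prod_unfold hyp_colat_def hyp_cot_def by (intro continuous_intros)

lemma integral_moment_density:
  "integral (cbox (0, 0) (pi/2, 1)) (\<lambda>(\<phi>, t). moment_density \<phi> t) = a * sin b / 2"
proof -
  have "integral (cbox (0, 0) (pi/2, 1)) (\<lambda>(\<phi>, t). moment_density \<phi> t)
      = integral {0..pi/2} (\<lambda>\<phi>. integral {0..1} (moment_density \<phi>))"
    using integral_prod_continuous[OF continuous_on_moment_density] by (simp add: cbox_interval)
  also have "\<dots> = integral {0..pi/2} (\<lambda>\<phi>. sin b / 2 * (sin \<phi> * hyp_colat \<phi> - cos \<phi> * hyp_colat' \<phi>))"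
    by (intro integral_cong integral_unique has_integral_moment_density_colat)
  also have "\<dots> = a * sin b / 2"
    using has_integral_moment_density_azimuth by (rule integral_unique)
  finally show ?thesis .
qed

lemma integral_radial_moment_density:
  "integral (cbox (0, 0, 0) (1, pi/2, 1)) (\<lambda>(r, \<phi>, t). r\<^sup>2 * moment_density \<phi> t) = a * sin b / 6"
proof -
  have "continuous_on UNIV (\<lambda>(r, \<phi>, t). r\<^sup>2 * moment_density \<phi> t)"
    unfolding moment_density_def hyp_colat_def hyp_cot_def case_prod_unfold
    by (intro continuous_intros)
  then have "integral (cbox (0, 0, 0) (1, pi/2, 1)) (\<lambda>(r, \<phi>, t). r\<^sup>2 * moment_density \<phi> t)
      = integral {0..1} (\<lambda>r. r\<^sup>2 * integral (cbox (0, 0) (pi/2, 1)) (\<lambda>(\<phi>, t). moment_density \<phi> t))"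
    by (subst integral_prod_continuous) (auto simp: cbox_interval case_prod_unfold intro: continuous_on_subset)
  also have "\<dots> = integral {0..1} (\<lambda>r. r\<^sup>2) * (a * sin b / 2)"
    unfolding integral_moment_density by simp
  also have "integral {0..1} (\<lambda>r::real. r\<^sup>2) = 1/3"
  proof (rule integral_unique)
    have "((\<lambda>r. r^3 / 3) has_real_derivative r\<^sup>2) (at r within {0..1})" for r :: real
      by (rule derivative_eq_intros refl | simp)+
    then show "((\<lambda>r::real. r\<^sup>2) has_integral 1/3) {0..1}"
      using fundamental_theorem_of_calculus[of 0 1 "\<lambda>r. r^3 / 3" "\<lambda>r. r\<^sup>2"]
      by (simp add: has_real_derivative_iff_has_vector_derivative)
  qed
  finally show ?thesis by simp
qed

end

locale orthonormal_frame =
  fixes C u w :: "real^3"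
  assumes orthonormal: "C \<bullet> C = 1" "u \<bullet> u = 1" "w \<bullet> w = 1" "C \<bullet> u = 0" "C \<bullet> w = 0" "u \<bullet> w = 0"
begin

lemma inner_frame_combination_basis:
  "(x1 *\<^sub>R C + x2 *\<^sub>R u + x3 *\<^sub>R w) \<bullet> C = x1"
  "(x1 *\<^sub>R C + x2 *\<^sub>R u + x3 *\<^sub>R w) \<bullet> u = x2"
  "(x1 *\<^sub>R C + x2 *\<^sub>R u + x3 *\<^sub>R w) \<bullet> w = x3"
proof -
  have "u \<bullet> C = 0" "w \<bullet> C = 0" "w \<bullet> u = 0"
    using orthonormal by (simp_all add: inner_commute)
  then show "(x1 *\<^sub>R C + x2 *\<^sub>R u + x3 *\<^sub>R w) \<bullet> C = x1"
    "(x1 *\<^sub>R C + x2 *\<^sub>R u + x3 *\<^sub>R w) \<bullet> u = x2"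
    "(x1 *\<^sub>R C + x2 *\<^sub>R u + x3 *\<^sub>R w) \<bullet> w = x3"
    using orthonormal by (simp_all add: inner_add_left)
qed

lemma inner_frame_combination:
  "(x1 *\<^sub>R C + x2 *\<^sub>R u + x3 *\<^sub>R w) \<bullet> (y1 *\<^sub>R C + y2 *\<^sub>R u + y3 *\<^sub>R w) = x1 * y1 + x2 * y2 + x3 * y3"
  by (simp add: inner_add_right inner_frame_combination_basis)

lemma norm_frame_combination:
  "norm (x1 *\<^sub>R C + x2 *\<^sub>R u + x3 *\<^sub>R w) = sqrt (x1\<^sup>2 + x2\<^sup>2 + x3\<^sup>2)"
  unfolding norm_eq_sqrt_inner inner_frame_combination by (simp add: power2_eq_square)

definition frame_map :: "real^3 \<Rightarrow> real^3" where
  "frame_map y = y$1 *\<^sub>R C + y$2 *\<^sub>R u + y$3 *\<^sub>R w"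

lemma orthogonal_transformation_frame_map: "orthogonal_transformation frame_map"
proof -
  have "linear frame_map"
    by (rule linearI) (simp_all add: frame_map_def algebra_simps)
  moreover have "frame_map y \<bullet> frame_map z = y \<bullet> z" for y z
    unfolding frame_map_def inner_frame_combination by (simp add: inner_vec_def sum_3)
  ultimately show ?thesis
    unfolding orthogonal_transformation_def by blast
qed

lemma frame_decomposition: "x = (x \<bullet> C) *\<^sub>R C + (x \<bullet> u) *\<^sub>R u + (x \<bullet> w) *\<^sub>R w"
proof -
  obtain y where x: "x = frame_map y"
    using orthogonal_transformation_surj[OF orthogonal_transformation_frame_map] by (metis surjD)
  show ?thesis
    unfolding x frame_map_def inner_frame_combination_basis ..
qed

lemma norm_frame_coordinates: "(norm x)\<^sup>2 = (x \<bullet> C)\<^sup>2 + (x \<bullet> u)\<^sup>2 + (x \<bullet> w)\<^sup>2"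
proof -
  have "norm x = norm ((x \<bullet> C) *\<^sub>R C + (x \<bullet> u) *\<^sub>R u + (x \<bullet> w) *\<^sub>R w)"
    using frame_decomposition[of x] by (rule arg_cong)
  then show ?thesis
    by (simp add: norm_frame_combination)
qed

definition sph_point :: "real \<Rightarrow> real \<Rightarrow> real^3" where
  "sph_point \<phi> \<rho> = cos \<rho> *\<^sub>R C + (sin \<rho> * cos \<phi>) *\<^sub>R u + (sin \<rho> * sin \<phi>) *\<^sub>R w"

lemma inner_sph_point_frame:
  "sph_point \<phi> \<rho> \<bullet> C = cos \<rho>" "sph_point \<phi> \<rho> \<bullet> u = sin \<rho> * cos \<phi>" "sph_point \<phi> \<rho> \<bullet> w = sin \<rho> * sin \<phi>"
  unfolding sph_point_def inner_frame_combination_basis by simp_all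

lemma norm_sph_point [simp]: "norm (sph_point \<phi> \<rho>) = 1"
proof -
  have "(sin \<rho> * cos \<phi>)\<^sup>2 + (sin \<rho> * sin \<phi>)\<^sup>2 = (sin \<rho>)\<^sup>2"
    by (simp add: power_mult_distrib flip: distrib_left)
  then have "(cos \<rho>)\<^sup>2 + (sin \<rho> * cos \<phi>)\<^sup>2 + (sin \<rho> * sin \<phi>)\<^sup>2 = 1"
    by (simp add: add.assoc)
  then show ?thesis
    by (simp add: sph_point_def norm_frame_combination)
qed

lemma sph_point_inj:
  assumes eq: "sph_point \<phi> \<rho> = sph_point \<phi>' \<rho>'"
    and "0 < \<rho>" "\<rho> < pi" "0 \<le> \<rho>'" "\<rho>' \<le> pi" "0 \<le> \<phi>" "\<phi> \<le> pi" "0 \<le> \<phi>'" "\<phi>' \<le> pi"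
  shows "\<phi> = \<phi>'" "\<rho> = \<rho>'"
proof -
  have cos_\<rho>: "cos \<rho> = cos \<rho>'"
    using arg_cong[OF eq, of "\<lambda>X. X \<bullet> C"] by (simp only: inner_sph_point_frame)
  show \<rho>: "\<rho> = \<rho>'"
    using assms(2-5) by (intro cos_inj_pi[OF _ _ _ _ cos_\<rho>]) simp_all
  have "sin \<rho> * cos \<phi> = sin \<rho>' * cos \<phi>'"
    using arg_cong[OF eq, of "\<lambda>X. X \<bullet> u"] by (simp only: inner_sph_point_frame)
  then have "sin \<rho> * cos \<phi> = sin \<rho> * cos \<phi>'"
    by (simp only: \<rho>)
  moreover have "sin \<rho> > 0"
    using assms(2,3) by (rule sin_gt_zero)
  ultimately have cos_\<phi>: "cos \<phi> = cos \<phi>'"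
    by simp
  show "\<phi> = \<phi>'"
    using assms(6-9) by (intro cos_inj_pi[OF _ _ _ _ cos_\<phi>]) simp_all
qed

lemma sph_coordinates_exist:
  assumes "norm y = 1" "0 < y \<bullet> u" "0 < y \<bullet> w"
  obtains \<phi> \<rho> where "0 < \<phi>" "\<phi> < pi/2" "0 < \<rho>" "\<rho> < pi" "y = sph_point \<phi> \<rho>"
proof -
  define s where "s = sqrt ((y \<bullet> u)\<^sup>2 + (y \<bullet> w)\<^sup>2)"
  obtain \<phi> where \<phi>: "0 < \<phi>" "\<phi> < pi" "y \<bullet> u = s * cos \<phi>" "y \<bullet> w = s * sin \<phi>"
    using polar_coordinates_upper_half_plane[OF assms(3), of "y \<bullet> u"] unfolding s_def by blast
  have "0 < s"
    using assms(3) by (simp add: s_def add_nonneg_pos)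
  then have "0 < cos \<phi>"
    using assms(2) \<phi>(3) by (simp add: zero_less_mult_iff)
  then have "\<phi> < pi/2"
    using \<phi>(1,2) cos_ge_zero[of "pi - \<phi>"] by (cases "\<phi> < pi/2") auto
  obtain \<rho> where \<rho>: "0 < \<rho>" "\<rho> < pi"
      "y \<bullet> C = sqrt ((y \<bullet> C)\<^sup>2 + s\<^sup>2) * cos \<rho>" "s = sqrt ((y \<bullet> C)\<^sup>2 + s\<^sup>2) * sin \<rho>"
    using polar_coordinates_upper_half_plane[OF \<open>0 < s\<close>, of "y \<bullet> C"] by blast
  have "(y \<bullet> C)\<^sup>2 + s\<^sup>2 = 1"
    using norm_frame_coordinates[of y] assms(1) by (simp add: s_def add_ac)
  then have "y \<bullet> C = cos \<rho>" "s = sin \<rho>"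
    using \<rho> by simp_all
  then have "(y \<bullet> C) *\<^sub>R C + (y \<bullet> u) *\<^sub>R u + (y \<bullet> w) *\<^sub>R w = sph_point \<phi> \<rho>"
    using \<phi>(3,4) by (simp add: sph_point_def)
  with frame_decomposition[of y] have "y = sph_point \<phi> \<rho>"
    by (rule trans)
  then show thesis
    using that \<phi>(1) \<open>\<phi> < pi/2\<close> \<rho>(1,2) by blast
qed

lemma abs_det_frame_map_comp: "\<bar>det (matrix (\<lambda>h. frame_map (M *v h)))\<bar> = \<bar>det M\<bar>"
proof -
  have "matrix (\<lambda>h. frame_map (M *v h)) = matrix frame_map ** M"
    using matrix_compose[OF matrix_vector_mul_linear orthogonal_transformation_linear[OF orthogonal_transformation_frame_map]]
    by (simp add: comp_def)
  then show ?thesis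
    using orthogonal_transformation_det[OF orthogonal_transformation_frame_map] by (simp add: det_mul abs_mult)
qed

end

section \<open>The triangle in spherical coordinates\<close>

locale right_triangle_frame = right_triangle_legs a b + orthonormal_frame C u w
  for a b :: real and C u w :: "real^3" +
  fixes A B :: "real^3"
  assumes A_eq: "A = cos b *\<^sub>R C + sin b *\<^sub>R w"
    and B_eq: "B = cos a *\<^sub>R C + sin a *\<^sub>R u"
begin

definition hyp_normal :: "real^3" where
  "hyp_normal = C - cot a *\<^sub>R u - cot b *\<^sub>R w"

lemma inner_hyp_normal: "X \<bullet> hyp_normal = X \<bullet> C - cot a * (X \<bullet> u) - cot b * (X \<bullet> w)"
  by (simp add: hyp_normal_def inner_diff_right)

lemma sph_triangle_eq:
  "sph_triangle A B C = {X. norm X = 1 \<and> 0 \<le> X \<bullet> u \<and> 0 \<le> X \<bullet> w \<and> 0 \<le> X \<bullet> hyp_normal}"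
proof (intro set_eqI iffI)
  fix X assume "X \<in> sph_triangle A B C"
  then obtain \<alpha> \<beta> \<gamma> where X: "norm X = 1" "\<alpha> \<ge> 0" "\<beta> \<ge> 0" "\<gamma> \<ge> 0"
     and "X = \<alpha> *\<^sub>R A + \<beta> *\<^sub>R B + \<gamma> *\<^sub>R C"
    unfolding sph_triangle_def by blast
  then have "X = (\<alpha> * cos b + \<beta> * cos a + \<gamma>) *\<^sub>R C + (\<beta> * sin a) *\<^sub>R u + (\<alpha> * sin b) *\<^sub>R w"
    by (simp add: A_eq B_eq algebra_simps)
  then have "X \<bullet> u = \<beta> * sin a" "X \<bullet> w = \<alpha> * sin b" "X \<bullet> hyp_normal = \<gamma>"
    using sin_a_pos sin_b_pos
    by (simp_all add: inner_frame_combination_basis inner_hyp_normal cot_def)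
  then show "X \<in> {X. norm X = 1 \<and> 0 \<le> X \<bullet> u \<and> 0 \<le> X \<bullet> w \<and> 0 \<le> X \<bullet> hyp_normal}"
    using X sin_a_pos sin_b_pos by simp
next
  fix X assume "X \<in> {X. norm X = 1 \<and> 0 \<le> X \<bullet> u \<and> 0 \<le> X \<bullet> w \<and> 0 \<le> X \<bullet> hyp_normal}"
  then have X: "norm X = 1" "0 \<le> X \<bullet> u" "0 \<le> X \<bullet> w" "0 \<le> X \<bullet> hyp_normal"
    by auto
  define \<alpha> \<beta> \<gamma> where "\<alpha> = X \<bullet> w / sin b" and "\<beta> = X \<bullet> u / sin a" and "\<gamma> = X \<bullet> hyp_normal"
  have "\<alpha> *\<^sub>R A + \<beta> *\<^sub>R B + \<gamma> *\<^sub>R C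
      = (\<alpha> * cos b + \<beta> * cos a + \<gamma>) *\<^sub>R C + (\<beta> * sin a) *\<^sub>R u + (\<alpha> * sin b) *\<^sub>R w"
    by (simp add: A_eq B_eq algebra_simps)
  also have "\<dots> = (X \<bullet> C) *\<^sub>R C + (X \<bullet> u) *\<^sub>R u + (X \<bullet> w) *\<^sub>R w"
    using sin_a_pos sin_b_pos by (simp add: \<alpha>_def \<beta>_def \<gamma>_def inner_hyp_normal cot_def)
  also have "\<dots> = X"
    by (rule frame_decomposition[symmetric])
  moreover have "\<alpha> \<ge> 0" "\<beta> \<ge> 0" "\<gamma> \<ge> 0"
    using X sin_a_pos sin_b_pos by (simp_all add: \<alpha>_def \<beta>_def \<gamma>_def)
  ultimately have "\<exists>\<alpha> \<beta> \<gamma>. \<alpha> \<ge> 0 \<and> \<beta> \<ge> 0 \<and> \<gamma> \<ge> 0 \<and> X = \<alpha> *\<^sub>R A + \<beta> *\<^sub>R B + \<gamma> *\<^sub>R C"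
    by metis
  then show "X \<in> sph_triangle A B C"
    unfolding sph_triangle_def using X(1) by blast
qed

lemma closed_sph_triangle: "closed (sph_triangle A B C)"
  unfolding sph_triangle_eq
  by (intro closed_Collect_conj closed_Collect_le closed_Collect_eq continuous_intros)

lemma inner_sph_point_A: "sph_point \<phi> \<rho> \<bullet> A = cos b * cos \<rho> + sin b * sin \<rho> * sin \<phi>"
  by (simp add: A_eq inner_add_right inner_sph_point_frame algebra_simps)

lemma inner_sph_point_hyp_normal_pos_iff:
  assumes "0 < \<rho>" "\<rho> < pi"
  shows "0 < sph_point \<phi> \<rho> \<bullet> hyp_normal \<longleftrightarrow> \<rho> < hyp_colat \<phi>"
proof -
  have "sin (hyp_colat \<phi>) * (sph_point \<phi> \<rho> \<bullet> hyp_normal) = sin (hyp_colat \<phi> - \<rho>)"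
    by (simp add: inner_hyp_normal inner_sph_point_frame hyp_cot_def cos_hyp_colat sin_diff algebra_simps)
  then have "0 < sph_point \<phi> \<rho> \<bullet> hyp_normal \<longleftrightarrow> 0 < sin (hyp_colat \<phi> - \<rho>)"
    using sin_hyp_colat_pos[of \<phi>] by (metis zero_less_mult_iff not_less_iff_gr_or_eq)
  also have "\<dots> \<longleftrightarrow> \<rho> < hyp_colat \<phi>"
  proof
    assume pos: "0 < sin (hyp_colat \<phi> - \<rho>)"
    show "\<rho> < hyp_colat \<phi>"
    proof (rule ccontr)
      assume "\<not> \<rho> < hyp_colat \<phi>"
      then have "0 \<le> sin (\<rho> - hyp_colat \<phi>)"
        using assms hyp_colat_bounds[of \<phi>] by (intro sin_ge_zero) simp_all
      moreover have "sin (\<rho> - hyp_colat \<phi>) = - sin (hyp_colat \<phi> - \<rho>)"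
        by (simp add: sin_diff)
      ultimately show False
        using pos by linarith
    qed
  next
    assume "\<rho> < hyp_colat \<phi>"
    then show "0 < sin (hyp_colat \<phi> - \<rho>)"
      using assms hyp_colat_bounds[of \<phi>] by (intro sin_gt_zero) simp_all
  qed
  finally show ?thesis .
qed

definition cone_box :: "(real^3) set" where
  "cone_box = box (vec3_of_triple (0, 0, 0)) (vec3_of_triple (1, pi/2, 1))"

lemma mem_cone_box: "v \<in> cone_box \<longleftrightarrow> 0 < v$1 \<and> v$1 < 1 \<and> 0 < v$2 \<and> v$2 < pi/2 \<and> 0 < v$3 \<and> v$3 < 1"
  by (simp add: cone_box_def vec3_of_triple_def mem_box_cart forall_3)

text \<open>Rescaling the polar angle by \<open>hyp_colat\<close> straightens the cone over the triangle
  into a box.\<close>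

definition cone_coords :: "real^3 \<Rightarrow> real^3" where
  "cone_coords v = v$1 *\<^sub>R sph_point (v$2) (v$3 * hyp_colat (v$2))"

lemma cone_polar_bounds:
  assumes "v \<in> cone_box"
  shows "0 < v$3 * hyp_colat (v$2)" "v$3 * hyp_colat (v$2) < hyp_colat (v$2)"
  using assms hyp_colat_bounds[of "v$2"] by (simp_all add: mem_cone_box)

lemma norm_cone_coords: "v \<in> cone_box \<Longrightarrow> norm (cone_coords v) = v$1"
  by (simp add: cone_coords_def mem_cone_box)

lemma sgn_cone_coords: "v \<in> cone_box \<Longrightarrow> sgn (cone_coords v) = sph_point (v$2) (v$3 * hyp_colat (v$2))"
  by (simp add: sgn_div_norm norm_cone_coords) (simp add: cone_coords_def mem_cone_box)

lemma cone_coords_subset_ball: "cone_coords ` cone_box \<subseteq> ball 0 1"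
  by (auto simp: norm_cone_coords mem_cone_box)

lemma sph_point_mem_sph_triangle:
  assumes "0 \<le> \<phi>" "\<phi> \<le> pi/2" "0 < \<rho>" "\<rho> < hyp_colat \<phi>"
  shows "sph_point \<phi> \<rho> \<in> sph_triangle A B C"
proof -
  have "\<rho> < pi"
    using assms(4) hyp_colat_bounds[of \<phi>] by linarith
  then have "0 < sph_point \<phi> \<rho> \<bullet> hyp_normal" "0 < sin \<rho>"
    using assms inner_sph_point_hyp_normal_pos_iff by (simp_all add: sin_gt_zero)
  moreover have "0 \<le> cos \<phi>" "0 \<le> sin \<phi>"
    using assms(1,2) by (simp_all add: cos_ge_zero sin_ge_zero)
  ultimately show ?thesis
    by (simp add: sph_triangle_eq inner_sph_point_frame)
qed

lemma inj_on_cone_coords: "inj_on cone_coords cone_box"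
proof (rule inj_onI)
  fix v v' assume v: "v \<in> cone_box" and v': "v' \<in> cone_box" and eq: "cone_coords v = cone_coords v'"
  have "v$1 = v'$1"
    using arg_cong[OF eq, of norm] by (simp add: norm_cone_coords v v')
  have "sph_point (v$2) (v$3 * hyp_colat (v$2)) = sph_point (v'$2) (v'$3 * hyp_colat (v'$2))"
    using arg_cong[OF eq, of sgn] by (simp add: sgn_cone_coords v v')
  moreover have "0 < v$3 * hyp_colat (v$2)" "v$3 * hyp_colat (v$2) < pi"
    "0 \<le> v'$3 * hyp_colat (v'$2)" "v'$3 * hyp_colat (v'$2) \<le> pi"
    using cone_polar_bounds[OF v] cone_polar_bounds[OF v'] hyp_colat_bounds[of "v$2"] hyp_colat_bounds[of "v'$2"]
    by linarith+
  moreover have "0 \<le> v$2" "v$2 \<le> pi" "0 \<le> v'$2" "v'$2 \<le> pi"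
    using v v' by (auto simp: mem_cone_box)
  ultimately have "v$2 = v'$2" "v$3 * hyp_colat (v$2) = v'$3 * hyp_colat (v'$2)"
    using sph_point_inj by blast+
  moreover have "hyp_colat (v$2) > 0"
    by (rule hyp_colat_bounds)
  ultimately show "v = v'"
    using \<open>v$1 = v'$1\<close> by (simp add: vec3_eq_iff)
qed

definition cone_boundary :: "(real^3) set" where
  "cone_boundary = {x. u \<bullet> x = 0} \<union> {x. w \<bullet> x = 0} \<union> {x. hyp_normal \<bullet> x = 0}"

lemma negligible_cone_boundary: "negligible cone_boundary"
proof -
  have "u \<noteq> 0" "w \<noteq> 0" "hyp_normal \<noteq> 0"
    using orthonormal(2,3) inner_hyp_normal[of C] orthonormal(1,4,5) by auto
  then show ?thesis
    unfolding cone_boundary_def by (intro negligible_Un negligible_hyperplane) auto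
qed

lemma cone_coords_cover:
  assumes "x \<in> ball 0 1" "sgn x \<in> sph_triangle A B C" "x \<notin> cone_boundary"
  shows "x \<in> cone_coords ` cone_box"
proof -
  have "u \<bullet> x \<noteq> 0" "w \<bullet> x \<noteq> 0" "hyp_normal \<bullet> x \<noteq> 0"
    using assms(3) by (auto simp: cone_boundary_def)
  then have "x \<noteq> 0" "sgn x \<bullet> u \<noteq> 0" "sgn x \<bullet> w \<noteq> 0" "sgn x \<bullet> hyp_normal \<noteq> 0"
    by (auto simp: sgn_div_norm inner_commute)
  then have y: "norm (sgn x) = 1" "0 < sgn x \<bullet> u" "0 < sgn x \<bullet> w" "0 < sgn x \<bullet> hyp_normal"
    using assms(2) by (auto simp: sph_triangle_eq)
  then obtain \<phi> \<rho> where \<phi>\<rho>: "0 < \<phi>" "\<phi> < pi/2" "0 < \<rho>" "\<rho> < pi" and sgn_x: "sgn x = sph_point \<phi> \<rho>"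
    using sph_coordinates_exist by blast
  then have "\<rho> < hyp_colat \<phi>"
    using y(4) inner_sph_point_hyp_normal_pos_iff by simp
  define v :: "real^3" where "v = vector [norm x, \<phi>, \<rho> / hyp_colat \<phi>]"
  have "0 < hyp_colat \<phi>"
    by (rule hyp_colat_bounds)
  then have "v \<in> cone_box"
    using \<phi>\<rho> \<open>\<rho> < hyp_colat \<phi>\<close> \<open>x \<noteq> 0\<close> assms(1) by (simp add: v_def mem_cone_box)
  moreover have "cone_coords v = x"
    using \<open>0 < hyp_colat \<phi>\<close> by (simp add: v_def cone_coords_def flip: sgn_x) (simp add: sgn_div_norm \<open>x \<noteq> 0\<close>)
  ultimately show ?thesis
    by blast
qed

definition cone_jacobian :: "real^3 \<Rightarrow> real^3^3" where
  "cone_jacobian v =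
    (let r = v$1; \<phi> = v$2; t = v$3; m = hyp_colat \<phi>; m' = hyp_colat' \<phi>; \<rho> = t * m in
     vector [vector [cos \<rho>, - r * sin \<rho> * t * m', - r * sin \<rho> * m],
             vector [sin \<rho> * cos \<phi>, r * (cos \<rho> * t * m' * cos \<phi> - sin \<rho> * sin \<phi>), r * cos \<rho> * m * cos \<phi>],
             vector [sin \<rho> * sin \<phi>, r * (cos \<rho> * t * m' * sin \<phi> + sin \<rho> * cos \<phi>), r * cos \<rho> * m * sin \<phi>]])"

lemma has_derivative_cone_coords:
  "(cone_coords has_derivative (\<lambda>h. frame_map (cone_jacobian v *v h))) (at v)"
proof -
  have "cone_coords = (\<lambda>v. (v$1 * cos (v$3 * hyp_colat (v$2))) *\<^sub>R C
      + (v$1 * (sin (v$3 * hyp_colat (v$2)) * cos (v$2))) *\<^sub>R u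
      + (v$1 * (sin (v$3 * hyp_colat (v$2)) * sin (v$2))) *\<^sub>R w)"
    by (auto simp: cone_coords_def sph_point_def algebra_simps)
  moreover have "(\<dots> has_derivative (\<lambda>h. frame_map (cone_jacobian v *v h))) (at v)"
    by (rule has_derivative_eq_rhs,
        (rule derivative_intros DERIV_compose_FDERIV[OF has_real_derivative_hyp_colat] refl)+)
      (simp add: fun_eq_iff frame_map_def cone_jacobian_def Let_def matrix_vector_mult_def sum_3
        algebra_simps)
  ultimately show ?thesis
    by simp
qed

lemma det_cone_jacobian:
  "det (cone_jacobian v) = - ((v$1)\<^sup>2 * hyp_colat (v$2) * sin (v$3 * hyp_colat (v$2)))"
proof -
  have generic: "det (vector [vector [c, - r * s * t * d, - r * s * m],
             vector [s * c', r * (c * t * d * c' - s * s'), r * c * m * c'],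
             vector [s * s', r * (c * t * d * s' + s * c'), r * c * m * s']] :: real^3^3)
      = - (r\<^sup>2 * m * s)"
    if "s\<^sup>2 + c\<^sup>2 = 1" "s'\<^sup>2 + c'\<^sup>2 = 1" for r t d m c s c' s' :: real
    using that unfolding det_3 vector_3 by algebra
  show ?thesis
    unfolding cone_jacobian_def Let_def by (rule generic) simp_all
qed

definition moment_integrand :: "real^3 \<Rightarrow> real" where
  "moment_integrand X = indicator (sph_triangle A B C) X * (X \<bullet> A)"

lemma cone_moment_integrand:
  assumes "v \<in> cone_box"
  shows "\<bar>det (matrix (\<lambda>h. frame_map (cone_jacobian v *v h)))\<bar> * moment_integrand (sgn (cone_coords v))
    = (v$1)\<^sup>2 * moment_density (v$2) (v$3)"
proof -
  have "sph_point (v$2) (v$3 * hyp_colat (v$2)) \<in> sph_triangle A B C"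
    using assms cone_polar_bounds[OF assms] by (intro sph_point_mem_sph_triangle) (simp_all add: mem_cone_box)
  moreover have "0 < sin (v$3 * hyp_colat (v$2))"
    using cone_polar_bounds[OF assms] hyp_colat_bounds[of "v$2"] by (intro sin_gt_zero) linarith+
  ultimately show ?thesis
    using hyp_colat_bounds[of "v$2"]
    by (simp add: abs_det_frame_map_comp det_cone_jacobian sgn_cone_coords assms moment_integrand_def
        inner_sph_point_A moment_density_def abs_mult power2_eq_square)
qed

lemma continuous_on_radial_moment_density:
  "continuous_on S (\<lambda>v::real^3. (v$1)\<^sup>2 * moment_density (v$2) (v$3))"
  unfolding moment_density_def hyp_colat_def hyp_cot_def by (intro continuous_intros)

lemma has_integral_cone_box:
  "((\<lambda>v. (v$1)\<^sup>2 * moment_density (v$2) (v$3)) has_integral a * sin b / 6) cone_box"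
proof -
  let ?f = "\<lambda>v::real^3. (v$1)\<^sup>2 * moment_density (v$2) (v$3)"
  let ?Q = "cbox (vec3_of_triple (0, 0, 0)) (vec3_of_triple (1, pi/2, 1))"
  have int: "?f integrable_on ?Q"
    by (intro integrable_continuous continuous_on_radial_moment_density)
  have "integral ?Q ?f = integral (cbox (0, 0, 0) (1, pi/2, 1)) (?f \<circ> vec3_of_triple)"
    using integral_cbox_vec3[OF int] by simp
  also have "?f \<circ> vec3_of_triple = (\<lambda>(r, \<phi>, t). r\<^sup>2 * moment_density \<phi> t)"
    by (auto simp: vec3_of_triple_def)
  also have "integral (cbox (0, 0, 0) (1, pi/2, 1)) \<dots> = a * sin b / 6"
    by (rule integral_radial_moment_density)
  finally have I: "integral ?Q ?f = a * sin b / 6" .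
  show ?thesis
    using integrable_integral[OF int] unfolding cone_box_def has_integral_open_interval I .
qed

lemma integral_moment_cone:
  "(\<lambda>x. moment_integrand (sgn x)) absolutely_integrable_on cone_coords ` cone_box \<and>
   integral (cone_coords ` cone_box) (\<lambda>x. moment_integrand (sgn x)) = a * sin b / 6"
proof -
  let ?f = "\<lambda>v::real^3. (v$1)\<^sup>2 * moment_density (v$2) (v$3)"
  let ?g = "\<lambda>v. \<bar>det (matrix (\<lambda>h. frame_map (cone_jacobian v *v h)))\<bar> * moment_integrand (sgn (cone_coords v))"
  have "?f absolutely_integrable_on cbox (vec3_of_triple (0, 0, 0)) (vec3_of_triple (1, pi/2, 1))"
    by (intro absolutely_integrable_continuous continuous_on_radial_moment_density)
  then have "?f absolutely_integrable_on cone_box"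
    unfolding cone_box_def by (rule set_integrable_subset) (auto simp: box_subset_cbox)
  then have "?g absolutely_integrable_on cone_box"
    by (rule absolutely_integrable_spike[OF _ negligible_empty]) (simp add: cone_moment_integrand)
  moreover have "integral cone_box ?g = a * sin b / 6"
  proof -
    have "integral cone_box ?g = integral cone_box ?f"
      by (rule integral_cong) (simp add: cone_moment_integrand)
    then show ?thesis
      using has_integral_cone_box by (simp add: integral_unique)
  qed
  moreover have "cone_box \<in> sets lebesgue"
    by (simp add: cone_box_def)
  moreover have "(cone_coords has_derivative (\<lambda>h. frame_map (cone_jacobian v *v h))) (at v within cone_box)" for v
    using has_derivative_cone_coords by (rule has_derivative_at_withinI)
  ultimately show ?thesis
    using has_absolute_integral_change_of_variables_real_valued[of cone_box cone_coords
        "\<lambda>v h. frame_map (cone_jacobian v *v h)" "\<lambda>x. moment_integrand (sgn x)"] inj_on_cone_coords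
    by blast
qed

lemma integral_moment_ball:
  "(\<lambda>x. moment_integrand (sgn x)) absolutely_integrable_on ball 0 1 \<and>
   integral (ball 0 1) (\<lambda>x. moment_integrand (sgn x)) = a * sin b / 6"
proof -
  have "{x \<in> ball 0 1 - cone_coords ` cone_box. moment_integrand (sgn x) \<noteq> 0} \<subseteq> cone_boundary"
    using cone_coords_cover by (force simp: moment_integrand_def)
  then have n1: "negligible {x \<in> ball 0 1 - cone_coords ` cone_box. moment_integrand (sgn x) \<noteq> 0}"
    using negligible_cone_boundary by (rule negligible_subset[rotated])
  have "{x \<in> cone_coords ` cone_box - ball 0 1. moment_integrand (sgn x) \<noteq> 0} = {}"
    using cone_coords_subset_ball by blast
  then have n2: "negligible {x \<in> cone_coords ` cone_box - ball 0 1. moment_integrand (sgn x) \<noteq> 0}"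
    by (simp only: negligible_empty)
  show ?thesis
    using integral_moment_cone
    unfolding absolutely_integrable_spike_set_eq[OF n1 n2] integral_spike_set[OF n1 n2] .
qed

lemma moment_sph_triangle: "4 * pi * moment A (sph_triangle A B C) = 1/2 * a * sin b"
proof -
  have [measurable]: "sph_triangle A B C \<in> sets borel"
    using closed_sph_triangle by (rule borel_closed)
  have "moment A (sph_triangle A B C) = (\<integral>X. moment_integrand X \<partial>sphere_mu)"
    by (simp add: moment_def set_lebesgue_integral_def moment_integrand_def)
  also have "\<dots> = 3 / (4 * pi) * integral (ball 0 1) (\<lambda>x. moment_integrand (sgn x))"
    using integral_moment_ball by (intro integral_sphere_mu) (auto simp: moment_integrand_def[abs_def])
  also have "\<dots> = 3 / (4 * pi) * (a * sin b / 6)"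
    by (simp only: integral_moment_ball)
  finally show ?thesis
    by simp
qed

end

lemma right_triangle_frame_exists:
  fixes A B C :: "real^3"
  assumes "norm A = 1" "norm B = 1" "norm C = 1"
    and "A \<noteq> B" "B \<noteq> C" "A \<noteq> C"
    and "independent {A, B, C}"
    and "right_angle_at C A B"
  shows "right_triangle_frame (arclen B C) (arclen C A) C
           (sgn (B - (B \<bullet> C) *\<^sub>R C)) (sgn (A - (A \<bullet> C) *\<^sub>R C)) A B"
proof -
  define tA tB where "tA = A - (A \<bullet> C) *\<^sub>R C" and "tB = B - (B \<bullet> C) *\<^sub>R C"
  have tA: "tA \<noteq> 0"
    unfolding tA_def using assms(6) by (intro tangent_nonzero_if_independent[OF assms(7)]) auto
  have tB: "tB \<noteq> 0"
    unfolding tB_def using assms(5) by (intro tangent_nonzero_if_independent[OF assms(7)]) auto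
  have C: "C \<bullet> C = 1"
    using assms(3) by (simp add: norm_eq_1)
  then have "C \<bullet> tA = 0" "C \<bullet> tB = 0"
    by (simp_all add: tA_def tB_def inner_diff_right inner_commute)
  moreover have "tB \<bullet> tA = 0"
    using assms(8) by (simp add: right_angle_at_def tA_def tB_def inner_commute)
  ultimately have frame: "orthonormal_frame C (sgn tB) (sgn tA)"
    using C tA tB by unfold_locales (simp_all add: sgn_div_norm dot_square_norm)
  have arcs: "0 < arclen B C" "arclen B C < pi" "0 < arclen C A" "arclen C A < pi"
    using arc_decomposition(2,3)[OF assms(3,1) tA[unfolded tA_def]] arc_decomposition(2,3)[OF assms(3,2) tB[unfolded tB_def]]
    by (simp_all add: arclen_def inner_commute)
  have "A = cos (arclen C A) *\<^sub>R C + sin (arclen C A) *\<^sub>R sgn tA"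
    "B = cos (arclen B C) *\<^sub>R C + sin (arclen B C) *\<^sub>R sgn tB"
    using arc_decomposition(1)[OF assms(3,1) tA[unfolded tA_def]] arc_decomposition(1)[OF assms(3,2) tB[unfolded tB_def]]
    by (simp_all add: arclen_def tA_def tB_def inner_commute)
  with frame arcs show ?thesis
    unfolding tA_def tB_def
    by (intro right_triangle_frame.intro right_triangle_legs.intro right_triangle_frame_axioms.intro) simp_all
qed

theorem theorem2p4:
  fixes A B C :: "real^3"
  assumes "norm A = 1" and "norm B = 1" and "norm C = 1"
    and "A \<noteq> B" and "B \<noteq> C" and "A \<noteq> C"
    and "independent {A, B, C}"
    and "right_angle_at C A B"
  shows "4 * pi * moment A (sph_triangle A B C)
           = 1/2 * arclen B C * sin (arclen C A)"
proof -
  interpret right_triangle_frame "arclen B C" "arclen C A" C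
      "sgn (B - (B \<bullet> C) *\<^sub>R C)" "sgn (A - (A \<bullet> C) *\<^sub>R C)" A B
    using right_triangle_frame_exists[OF assms] .
  show ?thesis
    by (rule moment_sph_triangle)
qed

end
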